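(* Let $\mathcal S=[-0.75,1]$ with the usual metric, $M=2$ target locations $S^*_1=0.5$, $S^*_2=-0.5$, $\chi(s)=s$, $f(s)=s^2$, and let every response (training or target) at location $s$ be $f(s)+\epsilon$ with $\epsilon\sim\mathcal N(0,1)$ independent across observations. Consider the Gaussian linear model without intercept, i.e. the GLM with $\kappa(\theta)=\theta^2/2$, covariate $x=s$ and scalar parameter $\beta$. Then: (i) the variance function is constant equal to $1$, the fourth central moment function is constant equal to $3$, and the target objective $\beta\mapsto\sum_{m=1}^2\mathbb E[\log h(Y^*_m;S^*_m\beta)]$ is strictly concave with unique maximizer $\beta^*=0$; (ii) if the training locations $S_1,S_2,\dots$ are i.i.d. uniform on $[-0.75,1]$, then almost surely they satisfy infill asymptotics with respect to $\{0.5,-0.5\}$; (iii) nevertheless, the ordinary least-squares estimate $\big(\sum_{n\le N}S_n^2\big)^{-1}\sum_{n\le N}S_nY_n$ computed from the training data does not converge in probability to $0$, and the one-nearest-neighbor estimator $\tau(\Psi^{N,1}Y_{1:N})$ does not converge in probability to $0$.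
   Context: $h(y;\theta)=c(y)\exp(\theta y-\kappa(\theta))$ denotes the exponential-family density. Infill asymptotics: for every target $S^*_m$ and every open set $U\ni S^*_m$, infinitely many $n$ have $S_n\in U$. For $A\in\mathbb R^M$, $\tau(A)$ is the maximizer of $\beta\mapsto\sum_m S^*_m\beta A_m-\kappa(S^*_m\beta)$. $\Psi^{N,1}\in\mathbb R^{M\times N}$ has $\Psi^{N,1}_{mn}=1$ if $S_n$ is the closest point of $\{S_1,\dots,S_N\}$ to $S^*_m$ and $0$ otherwise. *)

theory Defs
  imports "HOL-Probability.Probability"
begin

definition loc_space :: "real set" where
  "loc_space = {-0.75..1}"

definition Sstar :: "nat \<Rightarrow> real" where
  "Sstar m = (if m = 1 then 0.5 else if m = 2 then -0.5 else 0)"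

definition chi :: "real \<Rightarrow> real" where
  "chi s = s"

definition fmean :: "real \<Rightarrow> real" where
  "fmean s = s ^ 2"

definition resp_density :: "real \<Rightarrow> real \<Rightarrow> real" where
  "resp_density s y = normal_density (fmean s) 1 y"

definition kappa :: "real \<Rightarrow> real" where
  "kappa \<theta> = \<theta> ^ 2 / 2"

definition cbase :: "real \<Rightarrow> real" where
  "cbase y = exp (- (y ^ 2) / 2) / sqrt (2 * pi)"

definition hdens :: "real \<Rightarrow> real \<Rightarrow> real" where
  "hdens y \<theta> = cbase y * exp (\<theta> * y - kappa \<theta>)"

definition resp_mean :: "real \<Rightarrow> real" where
  "resp_mean s = (\<integral>y. y * resp_density s y \<partial>lborel)"

definition var_fun :: "real \<Rightarrow> real" where
  "var_fun s = (\<integral>y. (y - resp_mean s) ^ 2 * resp_density s y \<partial>lborel)"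

definition fourth_fun :: "real \<Rightarrow> real" where
  "fourth_fun s = (\<integral>y. (y - resp_mean s) ^ 4 * resp_density s y \<partial>lborel)"

definition target_obj :: "real \<Rightarrow> real" where
  "target_obj \<beta> = (\<Sum>m\<in>{1,2::nat}.
      \<integral>y. ln (hdens y (chi (Sstar m) * \<beta>)) * resp_density (Sstar m) y \<partial>lborel)"

definition strictly_concave_on :: "real set \<Rightarrow> (real \<Rightarrow> real) \<Rightarrow> bool" where
  "strictly_concave_on S g \<longleftrightarrow> convex S \<and>
     (\<forall>x\<in>S. \<forall>y\<in>S. x \<noteq> y \<longrightarrow> (\<forall>u::real. 0 < u \<and> u < 1 \<longrightarrow>
        g (u * x + (1 - u) * y) > u * g x + (1 - u) * g y))"

definition infill :: "(nat \<Rightarrow> real) \<Rightarrow> real set \<Rightarrow> bool" where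
  "infill x T \<longleftrightarrow> (\<forall>t\<in>T. \<forall>U. open U \<and> t \<in> U \<longrightarrow> infinite {n. x n \<in> U})"

definition conv_in_prob :: "'a measure \<Rightarrow> (nat \<Rightarrow> 'a \<Rightarrow> real) \<Rightarrow> real \<Rightarrow> bool" where
  "conv_in_prob M X c \<longleftrightarrow>
     (\<forall>e>0. (\<lambda>N. measure M {\<omega>\<in>space M. \<bar>X N \<omega> - c\<bar> > e}) \<longlonglongrightarrow> 0)"

definition tau :: "(nat \<Rightarrow> real) \<Rightarrow> real" where
  "tau A = (THE \<beta>. \<forall>\<beta>'.
      (\<Sum>m\<in>{1,2::nat}. chi (Sstar m) * \<beta>' * A m - kappa (chi (Sstar m) * \<beta>'))
    \<le> (\<Sum>m\<in>{1,2::nat}. chi (Sstar m) * \<beta> * A m - kappa (chi (Sstar m) * \<beta>)))"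

text \<open>One-nearest-neighbour matrix Psi^{N,1} for training locations x_0,...,x_{N-1}
  (0-based indexing of the training sample): entry (m,n) is 1 iff x_n is a closest
  point of {x_0,...,x_{N-1}} to S*_m.\<close>
definition Psi1 :: "nat \<Rightarrow> (nat \<Rightarrow> real) \<Rightarrow> nat \<Rightarrow> nat \<Rightarrow> real" where
  "Psi1 N x m n = (if n < N \<and> (\<forall>k<N. dist (x n) (Sstar m) \<le> dist (x k) (Sstar m)) then 1 else 0)"

definition Psi1_apply :: "nat \<Rightarrow> (nat \<Rightarrow> real) \<Rightarrow> (nat \<Rightarrow> real) \<Rightarrow> nat \<Rightarrow> real" where
  "Psi1_apply N x y m = (\<Sum>n<N. Psi1 N x m n * y n)"

definition ols :: "nat \<Rightarrow> (nat \<Rightarrow> real) \<Rightarrow> (nat \<Rightarrow> real) \<Rightarrow> real" where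
  "ols N x y = inverse (\<Sum>n<N. (chi (x n))^2) * (\<Sum>n<N. chi (x n) * y n)"

end

theory Submission
  imports Defs
begin

text \<open>
  Part (i) is a Gaussian computation: for \<open>Y \<sim> N(\<mu>, 1)\<close> the expected log-density
  \<open>E log h(Y; t)\<close> is a concave quadratic in \<open>t\<close>, and the targets \<open>\<plusminus>1/2\<close> share the mean
  response \<open>1/4\<close>, so the target objective is \<open>C - \<beta>\<^sup>2/4\<close>. Infill holds almost surely since
  every ball around a target has positive probability under the uniform design and is therefore
  hit by infinitely many of the independent locations.

  Least squares averages over the whole design: its
  numerator over \<open>N\<close> concentrates (second-moment bound for uncorrelated summands) at
  \<open>E[S Y] = E[S\<^sup>3] = 25/256 > 0\<close>, while its denominator over \<open>N\<close> is at most 1, so the estimate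
  exceeds \<open>25/512\<close> with probability tending to 1. The nearest-neighbour estimate is
  \<open>\<tau>(A) = A\<^sub>1 - A\<^sub>2\<close>, a signed sum of the responses at the nearest locations. If \<open>i\<close> is the
  first sample with nonzero weight, the estimate is \<open>\<plusminus>\<epsilon>\<^sub>i\<close> plus a quantity independent of
  \<open>\<epsilon>\<^sub>i\<close>; as the standard normal density is at most \<open>1/2\<close>, the estimate lies in
  \<open>[-1/4, 1/4]\<close> with conditional probability at most \<open>1/4\<close>. All weights vanish only if one of
  \<open>(-1/2, 0)\<close>, \<open>(0, 1/2)\<close> contains no sample, which has probability at most \<open>2 (5/7)\<^sup>N\<close>.
\<close>

section \<open>The Gaussian model\<close>

lemma resp_mean_eq: "resp_mean s = fmean s"
  unfolding resp_mean_def resp_density_def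
  using integral_normal_moment_nz_1[of 1 "fmean s"] by (simp add: mult.commute)

lemma var_fun_eq: "var_fun s = 1"
  unfolding var_fun_def resp_mean_eq resp_density_def
  using integral_normal_moment_even[of 1 "fmean s" 1] by (simp add: mult.commute)

lemma fourth_fun_eq: "fourth_fun s = 3"
  unfolding fourth_fun_def resp_mean_eq resp_density_def
  using integral_normal_moment_even[of 1 "fmean s" 2] by (simp add: mult.commute fact_numeral)

lemma integral_quadratic_normal_density:
  assumes "0 < \<sigma>"
  shows "(\<integral>y. (a * (y - \<mu>)^2 + b * (y - \<mu>) + c) * normal_density \<mu> \<sigma> y \<partial>lborel) = a * \<sigma>^2 + c"
proof -
  have "has_bochner_integral lborel (\<lambda>y. a * (normal_density \<mu> \<sigma> y * (y - \<mu>)^2)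
      + b * (normal_density \<mu> \<sigma> y * (y - \<mu>)) + c * normal_density \<mu> \<sigma> y) (a * \<sigma>^2 + b * 0 + c * 1)"
    using normal_moment_even[OF assms, of \<mu> 1] normal_moment_odd[OF assms, of \<mu> 0]
      normal_moment_even[OF assms, of \<mu> 0]
    by (intro has_bochner_integral_add has_bochner_integral_mult_right) simp_all
  then show ?thesis
    by (intro has_bochner_integral_integral_eq) (simp add: algebra_simps)
qed

lemma ln_hdens: "ln (hdens y t) = t * y - kappa t - y^2 / 2 - ln (sqrt (2 * pi))"
  unfolding hdens_def cbase_def by (simp add: ln_mult ln_div)

lemma expected_ln_hdens:
  "(\<integral>y. ln (hdens y t) * normal_density \<mu> 1 y \<partial>lborel)
     = t * \<mu> - kappa t - (1 + \<mu>^2) / 2 - ln (sqrt (2 * pi))"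
proof -
  have "(\<lambda>y. ln (hdens y t) * normal_density \<mu> 1 y) = (\<lambda>y. (- 1/2 * (y - \<mu>)^2 + (t - \<mu>) * (y - \<mu>)
      + (t * \<mu> - kappa t - \<mu>^2 / 2 - ln (sqrt (2 * pi)))) * normal_density \<mu> 1 y)"
    unfolding ln_hdens by (simp add: power2_eq_square algebra_simps)
  then show ?thesis
    by (simp only: integral_quadratic_normal_density[OF zero_less_one]) (simp add: field_simps)
qed

lemma target_obj_eq: "target_obj b = (- 17/16 - 2 * ln (sqrt (2 * pi))) - 1/4 * b^2"
  unfolding target_obj_def resp_density_def
  by (simp add: expected_ln_hdens Sstar_def chi_def fmean_def kappa_def power2_eq_square algebra_simps)

lemma strictly_concave_on_neg_quadratic:
  fixes a c :: real
  assumes "0 < a"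
  shows "strictly_concave_on UNIV (\<lambda>x. c - a * x^2)"
  unfolding strictly_concave_on_def
proof (intro conjI ballI allI impI)
  fix x y u :: real
  assume "x \<noteq> y" and u: "0 < u \<and> u < 1"
  have "c - a * (u * x + (1 - u) * y)^2 - (u * (c - a * x^2) + (1 - u) * (c - a * y^2))
      = a * (u * (1 - u) * (x - y)^2)"
    by (simp add: power2_eq_square algebra_simps)
  moreover have "0 < a * (u * (1 - u) * (x - y)^2)"
    using assms u \<open>x \<noteq> y\<close> by simp
  ultimately show "u * (c - a * x^2) + (1 - u) * (c - a * y^2) < c - a * (u * x + (1 - u) * y)^2"
    by linarith
qed simp

section \<open>Nearest-neighbour weights and least squares\<close>

lemma tau_eq: "tau A = A 1 - A 2"
proof -
  define d where "d = A 1 - A 2"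
  have objective: "(\<Sum>m\<in>{1,2::nat}. chi (Sstar m) * b * A m - kappa (chi (Sstar m) * b))
      = d^2 / 4 - (b - d)^2 / 4" for b
    by (simp add: d_def Sstar_def chi_def kappa_def power2_eq_square field_simps)
  show ?thesis
    unfolding tau_def objective d_def[symmetric]
  proof (rule the_equality)
    fix b assume "\<forall>b'. d^2 / 4 - (b' - d)^2 / 4 \<le> d^2 / 4 - (b - d)^2 / 4"
    then have "d^2 / 4 - (d - d)^2 / 4 \<le> d^2 / 4 - (b - d)^2 / 4" by blast
    then have "(b - d)^2 \<le> 0" by simp
    then show "b = d" by simp
  qed simp
qed

definition nn_weight :: "nat \<Rightarrow> (nat \<Rightarrow> real) \<Rightarrow> nat \<Rightarrow> real" where
  "nn_weight N x n = Psi1 N x 1 n - Psi1 N x 2 n"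

lemma tau_Psi1_apply: "tau (Psi1_apply N x y) = (\<Sum>n<N. nn_weight N x n * y n)"
  unfolding tau_eq Psi1_apply_def nn_weight_def by (simp add: sum_subtractf left_diff_distrib)

lemma abs_nn_weight: "nn_weight N x n \<noteq> 0 \<Longrightarrow> \<bar>nn_weight N x n\<bar> = 1"
proof -
  have "Psi1 N x 1 n \<in> {0, 1}" "Psi1 N x 2 n \<in> {0, 1}" by (simp_all add: Psi1_def)
  then show "nn_weight N x n \<noteq> 0 \<Longrightarrow> \<bar>nn_weight N x n\<bar> = 1"
    unfolding nn_weight_def by auto
qed

lemma Psi1_nearest_exists:
  assumes "0 < N"
  obtains a where "a < N" "Psi1 N x m a = 1"
proof -
  obtain a where "is_arg_min (\<lambda>k. dist (x k) (Sstar m)) (\<lambda>k. k \<in> {..<N}) a"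
    using ex_is_arg_min_if_finite[of "{..<N}"] assms by blast
  then show ?thesis
    by (intro that[of a]) (auto simp: is_arg_min_linorder Psi1_def)
qed

text \<open>If all weights vanish, some sample point is nearest to both targets; it lies on one
  side of 0, so no sample point lies strictly between 0 and the target on the other side.\<close>
lemma nn_weights_zero_imp_gap:
  assumes "0 < N" and zero: "\<forall>n<N. nn_weight N x n = 0"
  shows "(\<forall>n<N. x n \<notin> {-1/2<..<0}) \<or> (\<forall>n<N. x n \<notin> {0<..<1/2})"
proof -
  obtain a where a: "a < N" "Psi1 N x 1 a = 1"
    using Psi1_nearest_exists[OF \<open>0 < N\<close>] by blast
  then have "Psi1 N x 2 a = 1"
    using zero by (simp add: nn_weight_def)
  then have nearest: "\<forall>k<N. \<bar>x a - 1/2\<bar> \<le> \<bar>x k - 1/2\<bar> \<and> \<bar>x a + 1/2\<bar> \<le> \<bar>x k + 1/2\<bar>"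
    using a by (auto simp: Psi1_def Sstar_def dist_real_def split: if_splits)
  show ?thesis
  proof (cases "0 \<le> x a")
    case True
    have "x n \<notin> {-1/2<..<0}" if "n < N" for n
    proof -
      have "\<bar>x a + 1/2\<bar> \<le> \<bar>x n + 1/2\<bar>" using nearest that by blast
      then show ?thesis using True by auto
    qed
    then show ?thesis by blast
  next
    case False
    have "x n \<notin> {0<..<1/2}" if "n < N" for n
    proof -
      have "\<bar>x a - 1/2\<bar> \<le> \<bar>x n - 1/2\<bar>" using nearest that by blast
      then show ?thesis using False by auto
    qed
    then show ?thesis by blast
  qed
qed

definition first_nonzero_weight :: "nat \<Rightarrow> (nat \<Rightarrow> real) \<Rightarrow> nat \<Rightarrow> bool" where
  "first_nonzero_weight N x i \<longleftrightarrow> nn_weight N x i \<noteq> 0 \<and> (\<forall>n<i. nn_weight N x n = 0)"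

lemma first_nonzero_weight_exists:
  assumes "nn_weight N x n \<noteq> 0"
  obtains i where "i \<le> n" "first_nonzero_weight N x i"
  using assms exists_least_iff[where P="\<lambda>n. nn_weight N x n \<noteq> 0"]
  by (metis first_nonzero_weight_def not_le)

lemma first_nonzero_weight_unique:
  "first_nonzero_weight N x i \<Longrightarrow> first_nonzero_weight N x j \<Longrightarrow> i = j"
  unfolding first_nonzero_weight_def by (metis linorder_neqE_nat)

lemma measurable_nn_weight[measurable]:
  assumes [measurable]: "\<And>n. (\<lambda>\<omega>. x \<omega> n) \<in> borel_measurable M"
  shows "(\<lambda>\<omega>. nn_weight N (x \<omega>) n) \<in> borel_measurable M"
  unfolding nn_weight_def Psi1_def by measurable

lemma measurable_first_nonzero_weight[measurable]:
  assumes [measurable]: "\<And>n. (\<lambda>\<omega>. x \<omega> n) \<in> borel_measurable M"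
  shows "Measurable.pred M (\<lambda>\<omega>. first_nonzero_weight N (x \<omega>) i)"
  unfolding first_nonzero_weight_def by measurable

lemma ols_ge_mean_cross:
  assumes x: "\<forall>n<N. \<bar>x n\<bar> \<le> 1" and pos: "0 < (\<Sum>n<N. x n * y n)"
  shows "(\<Sum>n<N. x n * y n) / N \<le> ols N x y"
proof -
  define num where "num = (\<Sum>n<N. x n * y n)"
  define den where "den = (\<Sum>n<N. (x n)^2)"
  have "den \<le> (\<Sum>n<N. 1)"
    unfolding den_def using x by (intro sum_mono) (simp add: abs_square_le_1)
  then have den_le: "den \<le> N" by simp
  have "den \<noteq> 0"
  proof
    assume "den = 0"
    then have "\<forall>n\<in>{..<N}. (x n)^2 = 0"
      unfolding den_def by (subst sum_nonneg_eq_0_iff[symmetric]) auto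
    then show False using pos by simp
  qed
  moreover have "0 \<le> den" unfolding den_def by (simp add: sum_nonneg)
  ultimately have "0 < den" by linarith
  have "ols N x y = num / den"
    unfolding ols_def num_def den_def chi_def by (simp add: divide_inverse mult.commute)
  moreover have "num / N \<le> num / den"
    using \<open>0 < den\<close> den_le pos unfolding num_def by (intro divide_left_mono) auto
  ultimately show ?thesis unfolding num_def by simp
qed


lemma ols_gt_of_small_deviation:
  assumes "0 < N" and x: "\<forall>n<N. \<bar>x n\<bar> \<le> 1"
    and dev: "\<bar>\<Sum>n<N. x n * y n - \<mu>\<bar> < real N * \<mu> / 2"
  shows "\<mu> / 2 < ols N x y"
proof -
  have eq: "(\<Sum>n<N. x n * y n - \<mu>) = (\<Sum>n<N. x n * y n) - real N * \<mu>"
    by (simp add: sum_subtractf)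
  have "0 < real N * \<mu>"
    using dev abs_ge_zero[of "\<Sum>n<N. x n * y n - \<mu>"] by linarith
  then have "0 < \<mu>"
    using \<open>0 < N\<close> by (simp add: zero_less_mult_iff)
  have "real N * \<mu> / 2 < (\<Sum>n<N. x n * y n)"
    using dev unfolding eq abs_less_iff by linarith
  then have pos: "0 < (\<Sum>n<N. x n * y n)" and "\<mu> / 2 < (\<Sum>n<N. x n * y n) / N"
    using \<open>0 < real N * \<mu>\<close> \<open>0 < N\<close> by (linarith, simp add: field_simps)
  moreover have "(\<Sum>n<N. x n * y n) / N \<le> ols N x y"
    using ols_ge_mean_cross[OF x pos] .
  ultimately show ?thesis
    by linarith
qed

lemma centred_cross_square_le:
  fixes s e \<mu> :: real
  assumes "\<bar>s\<bar> \<le> 1" and "\<bar>\<mu>\<bar> \<le> 1"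
  shows "(s * (s^2 + e) - \<mu>)^2 \<le> 8 + 2 * e^2"
proof -
  define a where "a = s^3 - \<mu>"
  have "\<bar>s\<bar>^3 \<le> 1"
    using assms by (intro power_le_one) auto
  then have "\<bar>a\<bar> \<le> 2"
    using assms by (simp add: a_def power_abs[symmetric] abs_le_iff)
  then have "a^2 \<le> 4"
    using abs_le_square_iff[of a 2] by simp
  moreover have "(s * e)^2 \<le> e^2"
    using assms abs_square_le_1[of s] by (simp add: power_mult_distrib mult_left_le_one_le)
  moreover have "(a + s * e)^2 \<le> 2 * a^2 + 2 * (s * e)^2"
    using zero_le_power2[of "a - s * e"] by (simp add: power2_eq_square algebra_simps)
  moreover have "s * (s^2 + e) - \<mu> = a + s * e"
    by (simp add: a_def power2_eq_square power3_eq_cube algebra_simps)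
  ultimately show ?thesis by simp
qed

lemma not_conv_in_prob_of_lower_bound:
  assumes "0 < e" and lim: "l \<longlonglongrightarrow> L" and "0 < L"
    and bound: "\<forall>\<^sub>F N in sequentially. l N \<le> measure M {\<omega>\<in>space M. e < \<bar>X N \<omega> - c\<bar>}"
  shows "\<not> conv_in_prob M X c"
proof
  assume "conv_in_prob M X c"
  then have "(\<lambda>N. measure M {\<omega>\<in>space M. e < \<bar>X N \<omega> - c\<bar>}) \<longlonglongrightarrow> 0"
    using \<open>0 < e\<close> unfolding conv_in_prob_def by blast
  from tendsto_le[OF sequentially_bot this lim bound] \<open>0 < L\<close> show False by simp
qed

lemma (in prob_space) prob_abs_sum_ge_uncorrelated:
  fixes W :: "'i \<Rightarrow> 'a \<Rightarrow> real" and C a :: real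
  assumes "finite I" and [measurable]: "\<And>i. i \<in> I \<Longrightarrow> W i \<in> borel_measurable M"
    and int: "\<And>i j. i \<in> I \<Longrightarrow> j \<in> I \<Longrightarrow> integrable M (\<lambda>\<omega>. W i \<omega> * W j \<omega>)"
    and uncorr: "\<And>i j. i \<in> I \<Longrightarrow> j \<in> I \<Longrightarrow> i \<noteq> j \<Longrightarrow> expectation (\<lambda>\<omega>. W i \<omega> * W j \<omega>) = 0"
    and second_moment: "\<And>i. i \<in> I \<Longrightarrow> expectation (\<lambda>\<omega>. W i \<omega> * W i \<omega>) \<le> C"
    and "0 < a"
  shows "prob {\<omega>\<in>space M. a \<le> \<bar>\<Sum>i\<in>I. W i \<omega>\<bar>} \<le> card I * C / a^2"
proof -
  have square: "(\<lambda>\<omega>. (\<Sum>i\<in>I. W i \<omega>)^2) = (\<lambda>\<omega>. \<Sum>i\<in>I. \<Sum>j\<in>I. W i \<omega> * W j \<omega>)"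
    by (simp add: power2_eq_square sum_product)
  have int_square: "integrable M (\<lambda>\<omega>. (\<Sum>i\<in>I. W i \<omega>)^2)"
    unfolding square using int by simp
  have diagonal: "(\<Sum>j\<in>I. expectation (\<lambda>\<omega>. W i \<omega> * W j \<omega>)) = expectation (\<lambda>\<omega>. W i \<omega> * W i \<omega>)"
    if "i \<in> I" for i
    using \<open>finite I\<close> that uncorr by (subst sum.remove[of _ i]) (auto intro!: sum.neutral)
  have "expectation (\<lambda>\<omega>. (\<Sum>i\<in>I. W i \<omega>)^2) = (\<Sum>i\<in>I. \<Sum>j\<in>I. expectation (\<lambda>\<omega>. W i \<omega> * W j \<omega>))"
    unfolding square using int by (simp add: Bochner_Integration.integral_sum)
  also have "\<dots> = (\<Sum>i\<in>I. expectation (\<lambda>\<omega>. W i \<omega> * W i \<omega>))"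
    using diagonal by simp
  also have "\<dots> \<le> card I * C"
    using sum_mono[of I _ "\<lambda>_. C"] second_moment by simp
  finally have "expectation (\<lambda>\<omega>. (\<Sum>i\<in>I. W i \<omega>)^2) \<le> card I * C" .
  moreover have "prob {\<omega>\<in>space M. a \<le> \<bar>\<Sum>i\<in>I. W i \<omega>\<bar>}
      \<le> expectation (\<lambda>\<omega>. (\<Sum>i\<in>I. W i \<omega>)^2) / a^2"
    using int_square \<open>0 < a\<close> by (intro second_moment_method) auto
  ultimately show ?thesis
    by (meson divide_right_mono order_trans zero_le_power2)
qed

lemma std_normal_density_le_half: "std_normal_density x \<le> 1/2"
proof -
  have "2 \<le> sqrt (2 * pi)"
    using pi_gt3 by (subst real_le_rsqrt) auto
  have "std_normal_density x = exp (- (x^2) / 2) / sqrt (2 * pi)"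
    unfolding normal_density_def by simp
  also have "\<dots> \<le> 1 / sqrt (2 * pi)"
    by (intro divide_right_mono) auto
  also have "\<dots> \<le> 1 / 2"
    using \<open>2 \<le> sqrt (2 * pi)\<close> by (intro divide_left_mono) auto
  finally show ?thesis .
qed

lemma (in prob_space) emeasure_abs_affine_le:
  fixes f :: "real \<Rightarrow> real"
  assumes distr: "distributed M lborel \<epsilon> f" and f_le: "\<And>x. f x \<le> B"
    and "\<bar>c\<bar> = 1" and "0 \<le> e"
  shows "emeasure M {\<omega>\<in>space M. \<bar>c * \<epsilon> \<omega> + r\<bar> \<le> e} \<le> ennreal (2 * B * e)"
proof -
  obtain t where interval: "{z. \<bar>c * z + r\<bar> \<le> e} = {t .. t + 2 * e}"
  proof (cases "c = 1")
    case True
    then show ?thesis by (intro that[of "- r - e"]) (auto simp: abs_le_iff)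
  next
    case False
    with \<open>\<bar>c\<bar> = 1\<close> have "c = -1" by auto
    then show ?thesis by (intro that[of "r - e"]) (auto simp: abs_le_iff)
  qed
  have [measurable]: "\<epsilon> \<in> borel_measurable M"
    using distributed_measurable[OF distr] by simp
  have "{\<omega>\<in>space M. \<bar>c * \<epsilon> \<omega> + r\<bar> \<le> e} = \<epsilon> -` {t .. t + 2 * e} \<inter> space M"
    using interval by auto
  also have "emeasure M \<dots> = emeasure (distr M lborel \<epsilon>) {t .. t + 2 * e}"
    by (subst emeasure_distr) auto
  also have "\<dots> = (\<integral>\<^sup>+x. ennreal (f x) * indicator {t .. t + 2 * e} x \<partial>lborel)"
    using distr unfolding distributed_def by (auto simp: emeasure_density)
  also have "\<dots> \<le> (\<integral>\<^sup>+x. ennreal B * indicator {t .. t + 2 * e} x \<partial>lborel)"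
    by (intro nn_integral_mono mult_right_mono ennreal_leI f_le) auto
  also have "\<dots> = ennreal B * ennreal (2 * e)"
    using \<open>0 \<le> e\<close> by (subst nn_integral_cmult_indicator) auto
  also have "\<dots> \<le> ennreal (2 * B * e)"
    by (cases "0 \<le> B") (simp_all add: ennreal_mult'[symmetric] ennreal_neg ac_simps)
  finally show ?thesis .
qed

text \<open>Conditioning on \<open>V\<close>, i.e. integrating over the product of the two distributions.
  As \<open>indep_var\<close> relates variables of one common type, the noise enters as \<open>g \<circ> W\<close>.\<close>
lemma (in prob_space) prob_indep_affine_small_le:
  fixes f :: "real \<Rightarrow> real"
  assumes indep: "indep_var N V N' W" and [measurable]: "g \<in> borel_measurable N'"
    and distr: "distributed M lborel (\<lambda>\<omega>. g (W \<omega>)) f" and f_le: "\<And>x. f x \<le> B" and "0 \<le> B"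
    and [measurable]: "F \<in> sets N" "c \<in> borel_measurable N" "R \<in> borel_measurable N"
    and unit: "\<And>v. v \<in> F \<Longrightarrow> \<bar>c v\<bar> = 1" and "0 \<le> e"
  shows "prob {\<omega>\<in>space M. V \<omega> \<in> F \<and> \<bar>c (V \<omega>) * g (W \<omega>) + R (V \<omega>)\<bar> \<le> e}
    \<le> 2 * B * e * prob {\<omega>\<in>space M. V \<omega> \<in> F}"
proof -
  have V_meas[measurable]: "V \<in> measurable M N" and W_meas[measurable]: "W \<in> measurable M N'"
    using indep by (auto dest: indep_var_rv1 indep_var_rv2)
  interpret W: prob_space "distr M N' W"
    by (rule prob_space_distr) simp
  have joint: "distr M N V \<Otimes>\<^sub>M distr M N' W = distr M (N \<Otimes>\<^sub>M N') (\<lambda>\<omega>. (V \<omega>, W \<omega>))"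
    using indep unfolding indep_var_distribution_eq by simp
  define T where "T = {p \<in> space (N \<Otimes>\<^sub>M N'). fst p \<in> F \<and> \<bar>c (fst p) * g (snd p) + R (fst p)\<bar> \<le> e}"
  have [measurable]: "T \<in> sets (N \<Otimes>\<^sub>M N')" unfolding T_def by measurable
  have section_bound: "emeasure (distr M N' W) (Pair v -` T) \<le> ennreal (2 * B * e) * indicator F v"
    if "v \<in> space N" for v
  proof (cases "v \<in> F")
    case True
    then have "Pair v -` T = {w \<in> space N'. \<bar>c v * g w + R v\<bar> \<le> e}"
      using that by (auto simp: T_def space_pair_measure)
    moreover have "W -` {w \<in> space N'. \<bar>c v * g w + R v\<bar> \<le> e} \<inter> space M
        = {\<omega>\<in>space M. \<bar>c v * g (W \<omega>) + R v\<bar> \<le> e}"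
      using measurable_space[OF W_meas] by auto
    ultimately show ?thesis
      using True emeasure_abs_affine_le[OF distr f_le unit \<open>0 \<le> e\<close>, of v "R v"]
      by (simp add: emeasure_distr)
  next
    case False
    then show ?thesis by (simp add: T_def)
  qed
  have "emeasure M {\<omega>\<in>space M. V \<omega> \<in> F \<and> \<bar>c (V \<omega>) * g (W \<omega>) + R (V \<omega>)\<bar> \<le> e}
      = emeasure (distr M (N \<Otimes>\<^sub>M N') (\<lambda>\<omega>. (V \<omega>, W \<omega>))) T"
    by (subst emeasure_distr)
       (auto simp: T_def space_pair_measure measurable_space[OF V_meas] measurable_space[OF W_meas]
         intro!: arg_cong[where f="emeasure M"])
  also have "\<dots> = (\<integral>\<^sup>+v. emeasure (distr M N' W) (Pair v -` T) \<partial>distr M N V)"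
    unfolding joint[symmetric] by (subst W.emeasure_pair_measure_alt) auto
  also have "\<dots> \<le> (\<integral>\<^sup>+v. ennreal (2 * B * e) * indicator F v \<partial>distr M N V)"
    using section_bound by (intro nn_integral_mono) simp
  also have "\<dots> = ennreal (2 * B * e) * emeasure M {\<omega>\<in>space M. V \<omega> \<in> F}"
    by (simp add: nn_integral_cmult_indicator emeasure_distr vimage_def Int_def conj_commute)
  finally show ?thesis
    using \<open>0 \<le> B\<close> \<open>0 \<le> e\<close>
    by (simp add: emeasure_eq_measure ennreal_mult'[symmetric])
qed

section \<open>The uniform design with Gaussian noise\<close>

locale uniform_gaussian_design = prob_space M for M :: "'a measure" +
  fixes S eps :: "nat \<Rightarrow> 'a \<Rightarrow> real"
  assumes S_distr: "\<And>n. distributed M lborel (S n)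
      (\<lambda>x. indicator loc_space x / measure lborel loc_space)"
    and eps_distr: "\<And>n. distributed M lborel (eps n) std_normal_density"
    and indep_design: "indep_vars (\<lambda>_. borel) (\<lambda>i. case i of Inl n \<Rightarrow> S n | Inr n \<Rightarrow> eps n) UNIV"
begin

abbreviation design :: "nat + nat \<Rightarrow> 'a \<Rightarrow> real" where
  "design \<equiv> \<lambda>i. case i of Inl n \<Rightarrow> S n | Inr n \<Rightarrow> eps n"

lemma S_measurable[measurable]: "S n \<in> borel_measurable M"
  using distributed_measurable[OF S_distr] by simp

lemma eps_measurable[measurable]: "eps n \<in> borel_measurable M"
  using distributed_measurable[OF eps_distr] by simp

lemma prob_S_in:
  assumes A: "A \<in> sets borel"
  shows "prob {\<omega>\<in>space M. S n \<omega> \<in> A} = 4/7 * measure lborel (A \<inter> loc_space)"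
proof -
  have loc_space: "loc_space \<in> sets borel" "measure lborel loc_space = 7/4"
    by (simp_all add: loc_space_def)
  have finite: "emeasure lborel (A \<inter> loc_space) < \<infinity>"
    by (rule le_less_trans[OF emeasure_mono[of _ loc_space]]) (auto simp: loc_space_def)
  have "emeasure M {\<omega>\<in>space M. S n \<omega> \<in> A} = emeasure (distr M lborel (S n)) A"
    using A by (subst emeasure_distr) (auto simp: vimage_def Int_def conj_commute)
  also have "\<dots> = (\<integral>\<^sup>+x. ennreal (indicator loc_space x / measure lborel loc_space) * indicator A x \<partial>lborel)"
    using A S_distr[of n] unfolding distributed_def by (auto simp: emeasure_density loc_space)
  also have "\<dots> = (\<integral>\<^sup>+x. ennreal (4/7) * indicator (A \<inter> loc_space) x \<partial>lborel)"
    by (intro nn_integral_cong) (auto simp: loc_space indicator_def)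
  also have "\<dots> = ennreal (4/7 * measure lborel (A \<inter> loc_space))"
    using A loc_space finite
    by (subst nn_integral_cmult_indicator) (auto simp: emeasure_eq_ennreal_measure ennreal_mult'[symmetric])
  finally show ?thesis
    by (simp add: emeasure_eq_measure)
qed

lemma AE_abs_S_le_1: "AE \<omega> in M. \<bar>S n \<omega>\<bar> \<le> 1"
proof -
  have "prob {\<omega>\<in>space M. S n \<omega> \<in> loc_space} = 1"
    by (subst prob_S_in) (simp_all add: loc_space_def)
  from AE_prob_1[OF this] show ?thesis
    by eventually_elim (auto simp: loc_space_def)
qed

lemma integrable_bounded_fun_S:
  fixes B :: real
  assumes [measurable]: "g \<in> borel_measurable borel" and bound: "\<And>x. \<bar>x\<bar> \<le> 1 \<Longrightarrow> \<bar>g x\<bar> \<le> B"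
  shows "integrable M (\<lambda>\<omega>. g (S n \<omega>))"
  using AE_abs_S_le_1[of n] by (intro integrable_const_bound[where B=B]) (auto intro: bound)

lemma expectation_S_cube: "expectation (\<lambda>\<omega>. S n \<omega> ^ 3) = 25/256"
proof -
  have "expectation (\<lambda>\<omega>. S n \<omega> ^ 3) = (\<integral>x. indicator loc_space x / measure lborel loc_space * x ^ 3 \<partial>lborel)"
    by (rule distributed_integral[OF S_distr, symmetric]) (auto simp: loc_space_def)
  also have "\<dots> = (\<integral>x. 4/7 * (x ^ 3 * indicator {-3/4..1} x) \<partial>lborel)"
    by (intro Bochner_Integration.integral_cong) (auto simp: loc_space_def indicator_def)
  also have "\<dots> = 4/7 * (\<integral>x. x ^ 3 * indicator {-3/4..1} x \<partial>lborel)"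
    by (rule integral_mult_right_zero)
  also have "(\<integral>x. x ^ 3 * indicator {-3/4..1} x \<partial>lborel) = (1 ^ 4 - (-3/4) ^ 4) / (4::real)"
    using integral_power[of "-3/4" 1 3] by simp
  finally show ?thesis by (simp add: power_numeral_reduce)
qed

lemma expectation_eps: "expectation (eps n) = 0"
  using distributed_integral[OF eps_distr, of "\<lambda>x. x"] integral_std_normal_moment_odd[of 0] by simp

lemma integrable_eps: "integrable M (eps n)"
  using distributed_integrable[OF eps_distr, of "\<lambda>x. x"] integrable_std_normal_moment[of 1] by simp

lemma expectation_eps_square: "expectation (\<lambda>\<omega>. (eps n \<omega>)^2) = 1"
  using distributed_integral[OF eps_distr, of "\<lambda>x. x^2"] integral_std_normal_moment_even[of 1] by simp

lemma integrable_eps_square: "integrable M (\<lambda>\<omega>. (eps n \<omega>)^2)"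
  using distributed_integrable[OF eps_distr, of "\<lambda>x. x^2"] integrable_std_normal_moment[of 2] by simp

lemma indep_var_S_eps: "indep_var borel (S n) borel (eps n)"
proof -
  have "indep_var borel ((\<lambda>w. w (Inl n)) \<circ> (\<lambda>\<omega>. restrict (\<lambda>i. design i \<omega>) {Inl n}))
      borel ((\<lambda>w. w (Inr n)) \<circ> (\<lambda>\<omega>. restrict (\<lambda>i. design i \<omega>) {Inr n}))"
    using indep_var_restrict[OF indep_design, of "{Inl n}" "{Inr n}"]
    by (rule indep_var_compose) (simp_all add: measurable_component_singleton)
  then show ?thesis
    by (simp add: comp_def)
qed

lemma indep_var_distinct_samples:
  assumes "i \<noteq> j"
    and [measurable]: "case_prod g \<in> borel_measurable (borel \<Otimes>\<^sub>M borel)"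
      "case_prod h \<in> borel_measurable (borel \<Otimes>\<^sub>M borel)"
  shows "indep_var borel (\<lambda>\<omega>. g (S i \<omega>) (eps i \<omega>)) borel (\<lambda>\<omega>. h (S j \<omega>) (eps j \<omega>))"
proof -
  let ?block = "\<lambda>k \<omega>. restrict (\<lambda>i. design i \<omega>) {Inl k, Inr k}"
  have "indep_var (PiM {Inl i, Inr i} (\<lambda>_. borel)) (?block i) (PiM {Inl j, Inr j} (\<lambda>_. borel)) (?block j)"
    using \<open>i \<noteq> j\<close> by (intro indep_var_restrict[OF indep_design]) auto
  then have "indep_var borel ((\<lambda>w. g (w (Inl i)) (w (Inr i))) \<circ> ?block i)
      borel ((\<lambda>w. h (w (Inl j)) (w (Inr j))) \<circ> ?block j)"
    by (rule indep_var_compose) measurable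
  then show ?thesis
    by (simp add: comp_def)
qed

text \<open>The constant is \<open>E[S\<^sup>3] = E[S Y]\<close>.\<close>
definition centred_cross :: "nat \<Rightarrow> 'a \<Rightarrow> real" where
  "centred_cross n \<omega> = S n \<omega> * (fmean (S n \<omega>) + eps n \<omega>) - 25/256"

lemma centred_cross_measurable[measurable]: "centred_cross n \<in> borel_measurable M"
  unfolding centred_cross_def fmean_def by measurable

lemma integrable_S: "integrable M (S n)"
  using integrable_bounded_fun_S[of "\<lambda>x. x" 1 n] by simp

lemma integrable_S_eps: "integrable M (\<lambda>\<omega>. S n \<omega> * eps n \<omega>)"
  by (rule indep_var_integrable[OF indep_var_S_eps integrable_S integrable_eps])

lemma expectation_S_eps: "expectation (\<lambda>\<omega>. S n \<omega> * eps n \<omega>) = 0"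
  by (simp add: indep_var_lebesgue_integral[OF indep_var_S_eps integrable_S integrable_eps]
      expectation_eps)

lemma
  shows integrable_centred_cross: "integrable M (centred_cross n)"
    and expectation_centred_cross: "expectation (centred_cross n) = 0"
proof -
  have cube: "integrable M (\<lambda>\<omega>. S n \<omega> ^ 3)"
    by (rule integrable_bounded_fun_S[where B=1]) (simp_all add: power_abs power_le_one)
  have eq: "centred_cross n = (\<lambda>\<omega>. S n \<omega> ^ 3 + S n \<omega> * eps n \<omega> - 25/256)"
    by (simp add: fun_eq_iff centred_cross_def fmean_def power2_eq_square power3_eq_cube algebra_simps)
  show "integrable M (centred_cross n)"
    unfolding eq using cube integrable_S_eps by simp
  show "expectation (centred_cross n) = 0"
    unfolding eq using cube integrable_S_eps
    by (simp add: expectation_S_cube expectation_S_eps prob_space)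
qed

lemma
  shows integrable_centred_cross_square: "integrable M (\<lambda>\<omega>. centred_cross n \<omega> * centred_cross n \<omega>)"
    and expectation_centred_cross_square: "expectation (\<lambda>\<omega>. centred_cross n \<omega> * centred_cross n \<omega>) \<le> 10"
proof -
  have bound: "AE \<omega> in M. centred_cross n \<omega> * centred_cross n \<omega> \<le> 8 + 2 * (eps n \<omega>)^2"
    using AE_abs_S_le_1[of n]
    by eventually_elim (use centred_cross_square_le in \<open>simp add: centred_cross_def fmean_def power2_eq_square\<close>)
  have majorant: "integrable M (\<lambda>\<omega>. 8 + 2 * (eps n \<omega>)^2)"
    using integrable_eps_square by simp
  show int: "integrable M (\<lambda>\<omega>. centred_cross n \<omega> * centred_cross n \<omega>)"
    using bound by (intro Bochner_Integration.integrable_bound[OF majorant]) auto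
  have "expectation (\<lambda>\<omega>. centred_cross n \<omega> * centred_cross n \<omega>) \<le> expectation (\<lambda>\<omega>. 8 + 2 * (eps n \<omega>)^2)"
    using bound int majorant by (intro integral_mono_AE) auto
  also have "\<dots> = 10"
    using integrable_eps_square by (simp add: expectation_eps_square prob_space)
  finally show "expectation (\<lambda>\<omega>. centred_cross n \<omega> * centred_cross n \<omega>) \<le> 10" .
qed

lemma integrable_centred_cross_mult: "integrable M (\<lambda>\<omega>. centred_cross i \<omega> * centred_cross j \<omega>)"
  and expectation_centred_cross_mult: "i \<noteq> j \<Longrightarrow> expectation (\<lambda>\<omega>. centred_cross i \<omega> * centred_cross j \<omega>) = 0"
proof -
  define g where "g s e = s * (fmean s + e) - 25/256" for s e :: real
  have [measurable]: "case_prod g \<in> borel_measurable (borel \<Otimes>\<^sub>M borel)"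
    unfolding g_def fmean_def by measurable
  have centred_cross_eq: "centred_cross k = (\<lambda>\<omega>. g (S k \<omega>) (eps k \<omega>))" for k
    by (simp add: fun_eq_iff g_def centred_cross_def)
  have indep: "indep_var borel (centred_cross i) borel (centred_cross j)" if "i \<noteq> j"
    unfolding centred_cross_eq by (rule indep_var_distinct_samples[OF that]) measurable
  show "integrable M (\<lambda>\<omega>. centred_cross i \<omega> * centred_cross j \<omega>)"
  proof (cases "i = j")
    case True
    then show ?thesis using integrable_centred_cross_square by simp
  next
    case False
    then show ?thesis
      by (rule indep_var_integrable[OF indep integrable_centred_cross integrable_centred_cross])
  qed
  show "expectation (\<lambda>\<omega>. centred_cross i \<omega> * centred_cross j \<omega>) = 0" if "i \<noteq> j"
    by (simp add: indep_var_lebesgue_integral[OF indep[OF that] integrable_centred_cross integrable_centred_cross]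
        expectation_centred_cross)
qed

lemma prob_ols_gt:
  assumes "0 < N"
  shows "1 - 10 / (25/512)^2 / real N
    \<le> prob {\<omega>\<in>space M. 25/512 < \<bar>ols N (\<lambda>n. S n \<omega>) (\<lambda>n. fmean (S n \<omega>) + eps n \<omega>) - 0\<bar>}"
    (is "_ \<le> prob ?far")
proof -
  define a where "a = real N * (25/256) / 2"
  let ?deviate = "{\<omega>\<in>space M. a \<le> \<bar>\<Sum>n<N. centred_cross n \<omega>\<bar>}"
  have "prob ?deviate \<le> real (card {..<N}) * 10 / a^2"
    using assms
    by (intro prob_abs_sum_ge_uncorrelated integrable_centred_cross_mult expectation_centred_cross_mult
        expectation_centred_cross_square) (auto simp: a_def)
  also have "\<dots> = 10 / (25/512)^2 / real N"
    using assms by (simp add: a_def power2_eq_square)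
  finally have tail: "prob ?deviate \<le> 10 / (25/512)^2 / real N" .
  have "AE \<omega> in M. \<forall>n\<in>{..<N}. \<bar>S n \<omega>\<bar> \<le> 1"
    using AE_abs_S_le_1 by (intro AE_finite_allI) auto
  then have "AE \<omega> in M. \<omega> \<in> space M - ?deviate \<longrightarrow> \<omega> \<in> ?far"
  proof eventually_elim
    case (elim \<omega>)
    show ?case
    proof
      assume "\<omega> \<in> space M - ?deviate"
      then have "\<omega> \<in> space M"
        and "\<bar>\<Sum>n<N. S n \<omega> * (fmean (S n \<omega>) + eps n \<omega>) - 25/256\<bar> < real N * (25/256) / 2"
        by (auto simp: a_def centred_cross_def)
      then show "\<omega> \<in> ?far"
        using ols_gt_of_small_deviation[OF assms, of "\<lambda>n. S n \<omega>" "\<lambda>n. fmean (S n \<omega>) + eps n \<omega>" "25/256"]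
          elim
        by auto
    qed
  qed
  then have "prob (space M - ?deviate) \<le> prob ?far"
    by (intro finite_measure_mono_AE) (auto simp: ols_def chi_def fmean_def)
  with tail show ?thesis
    by (subst (asm) prob_compl) auto
qed

lemma not_conv_in_prob_ols:
  "\<not> conv_in_prob M (\<lambda>N \<omega>. ols N (\<lambda>n. S n \<omega>) (\<lambda>n. fmean (S n \<omega>) + eps n \<omega>)) 0"
proof (rule not_conv_in_prob_of_lower_bound)
  show "(\<lambda>N. 1 - 10 / (25/512)^2 / real N) \<longlonglongrightarrow> 1"
    using tendsto_diff[OF tendsto_const lim_const_over_n, of 1 "10 / (25/512)^2"] by simp
  show "\<forall>\<^sub>F N in sequentially. 1 - 10 / (25/512)^2 / real N
      \<le> prob {\<omega>\<in>space M. 25/512 < \<bar>ols N (\<lambda>n. S n \<omega>) (\<lambda>n. fmean (S n \<omega>) + eps n \<omega>) - 0\<bar>}"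
    using eventually_gt_at_top[of 0] by eventually_elim (rule prob_ols_gt)
qed simp_all

lemma prob_S_never_in:
  assumes "finite J" "J \<noteq> {}" and B: "B \<in> sets borel"
  shows "prob {\<omega>\<in>space M. \<forall>n\<in>J. S n \<omega> \<notin> B} = (1 - 4/7 * measure lborel (B \<inter> loc_space)) ^ card J"
proof -
  have miss: "prob (S n -` (- B) \<inter> space M) = 1 - 4/7 * measure lborel (B \<inter> loc_space)" for n
  proof -
    have "S n -` (- B) \<inter> space M = space M - {\<omega>\<in>space M. S n \<omega> \<in> B}" by auto
    then show ?thesis using B by (simp add: prob_compl prob_S_in)
  qed
  have "prob (\<Inter>k\<in>Inl ` J. design k -` (- B) \<inter> space M) = (\<Prod>k\<in>Inl ` J. prob (design k -` (- B) \<inter> space M))"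
    using assms by (intro indep_varsD[OF indep_design]) auto
  moreover have "(\<Inter>k\<in>Inl ` J. design k -` (- B) \<inter> space M) = {\<omega>\<in>space M. \<forall>n\<in>J. S n \<omega> \<notin> B}"
    using \<open>J \<noteq> {}\<close> by auto
  ultimately show ?thesis
    by (simp add: prod.reindex miss)
qed

lemma AE_frequently_S_in:
  assumes B[measurable]: "B \<in> sets borel" and pos: "0 < measure lborel (B \<inter> loc_space)"
  shows "AE \<omega> in M. \<exists>\<^sub>\<infinity>n. S n \<omega> \<in> B"
proof -
  define p where "p = 1 - 4/7 * measure lborel (B \<inter> loc_space)"
  have "p = prob {\<omega>\<in>space M. \<forall>n\<in>{0}. S n \<omega> \<notin> B}"
    using prob_S_never_in[of "{0}"] by (simp add: p_def)
  then have p: "0 \<le> p" "p < 1"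
    using pos by (simp_all add: p_def)
  have "AE \<omega> in M. \<exists>n\<ge>m. S n \<omega> \<in> B" for m
  proof -
    define never where "never = {\<omega>\<in>space M. \<forall>n\<ge>m. S n \<omega> \<notin> B}"
    have never_le: "prob never \<le> p ^ K" if "0 < K" for K
    proof -
      have "prob never \<le> prob {\<omega>\<in>space M. \<forall>n\<in>{m..<m+K}. S n \<omega> \<notin> B}"
        by (intro finite_measure_mono) (auto simp: never_def)
      also have "\<dots> = p ^ K"
        using that by (subst prob_S_never_in) (auto simp: p_def)
      finally show ?thesis .
    qed
    have "prob never \<le> 0"
    proof (rule LIMSEQ_le_const)
      show "(\<lambda>K. p ^ K) \<longlonglongrightarrow> 0" using p by (intro LIMSEQ_power_zero) simp
      show "\<exists>N. \<forall>K\<ge>N. prob never \<le> p ^ K" using never_le by (intro exI[of _ 1]) simp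
    qed
    moreover have "never \<in> events" unfolding never_def by measurable
    ultimately show ?thesis
      by (subst AE_iff_measurable[where N=never]) (auto simp: never_def emeasure_eq_measure measure_le_0_iff)
  qed
  then show ?thesis
    unfolding INFM_nat_le by (subst AE_all_countable) blast
qed

lemma infill_S: "AE \<omega> in M. infill (\<lambda>n. S n \<omega>) {Sstar 1, Sstar 2}"
proof -
  have ball_pos: "0 < measure lborel (ball t (1 / (real k + 4)) \<inter> loc_space)"
    if "t \<in> {1/2, -1/2}" for t k
  proof -
    define r where "r = 1 / (real k + 4)"
    have "0 < r" "r \<le> 1/4" by (simp_all add: r_def field_simps)
    then have "ball t r \<inter> loc_space = {t - r <..< t + r}"
      using that by (auto simp: ball_eq_greaterThanLessThan loc_space_def)
    then show ?thesis using \<open>0 < r\<close> by (simp add: r_def[symmetric])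
  qed
  then have "AE \<omega> in M. \<forall>k. \<forall>t\<in>{1/2, -1/2}. \<exists>\<^sub>\<infinity>n. S n \<omega> \<in> ball t (1 / (real k + 4))"
    by (subst AE_all_countable, intro allI AE_finite_allI AE_frequently_S_in) (auto intro!: ball_pos)
  then show ?thesis
  proof eventually_elim
    case (elim \<omega>)
    show "infill (\<lambda>n. S n \<omega>) {Sstar 1, Sstar 2}"
      unfolding infill_def
    proof (intro ballI allI impI)
      fix t U assume "t \<in> {Sstar 1, Sstar 2}" and U: "open U \<and> t \<in> U"
      then have t: "t \<in> {1/2, -1/2}" by (auto simp: Sstar_def)
      obtain e where "0 < e" "ball t e \<subseteq> U"
        using U open_contains_ball by blast
      obtain k :: nat where "inverse (real (Suc k)) < e"
        using reals_Archimedean[OF \<open>0 < e\<close>] by blast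
      moreover have "1 / (real k + 4) \<le> inverse (real (Suc k))"
        by (simp add: field_simps)
      ultimately have "ball t (1 / (real k + 4)) \<subseteq> U"
        using \<open>ball t e \<subseteq> U\<close> by (auto simp: ball_def)
      moreover have "\<exists>\<^sub>\<infinity>n. S n \<omega> \<in> ball t (1 / (real k + 4))"
        using elim t by blast
      ultimately have "\<exists>\<^sub>\<infinity>n. S n \<omega> \<in> U"
        by (auto elim!: frequently_elim1)
      then show "infinite {n. S n \<omega> \<in> U}"
        by (simp add: Inf_many_def)
    qed
  qed
qed

definition nn_estimate :: "nat \<Rightarrow> 'a \<Rightarrow> real" where
  "nn_estimate N \<omega> = (\<Sum>n<N. nn_weight N (\<lambda>n. S n \<omega>) n * (fmean (S n \<omega>) + eps n \<omega>))"

lemma nn_estimate_measurable[measurable]: "nn_estimate N \<in> borel_measurable M"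
  unfolding nn_estimate_def fmean_def by measurable

lemma prob_first_nonzero_weight_small:
  assumes "i < N" and "0 \<le> e"
  shows "prob {\<omega>\<in>space M. first_nonzero_weight N (\<lambda>n. S n \<omega>) i \<and> \<bar>nn_estimate N \<omega>\<bar> \<le> e}
    \<le> e * prob {\<omega>\<in>space M. first_nonzero_weight N (\<lambda>n. S n \<omega>) i}"
proof -
  let ?K = "- {Inr i}"
  let ?N = "PiM ?K (\<lambda>_. (borel :: real measure))"
  define V where "V \<omega> = restrict (\<lambda>k. design k \<omega>) ?K" for \<omega>
  define F where "F = {w \<in> space ?N. first_nonzero_weight N (\<lambda>n. w (Inl n)) i}"
  define c where "c w = nn_weight N (\<lambda>n. w (Inl n)) i" for w :: "nat + nat \<Rightarrow> real"
  define R where "R w = c w * fmean (w (Inl i))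
    + (\<Sum>n\<in>{..<N} - {i}. nn_weight N (\<lambda>n. w (Inl n)) n * (fmean (w (Inl n)) + w (Inr n)))"
    for w :: "nat + nat \<Rightarrow> real"
  define W where "W \<omega> = restrict (\<lambda>k. design k \<omega>) {Inr i}" for \<omega>
  have indep: "indep_var ?N V (PiM {Inr i} (\<lambda>_. borel)) W"
    unfolding V_def W_def by (rule indep_var_restrict[OF indep_design]) auto
  have W_eps: "(\<lambda>\<omega>. W \<omega> (Inr i)) = eps i"
    by (simp add: W_def fun_eq_iff)
  have V_space: "V \<omega> \<in> space ?N" if "\<omega> \<in> space M" for \<omega>
    using that by (auto simp: V_def space_PiM measurable_space)
  have F_iff: "V \<omega> \<in> F \<longleftrightarrow> first_nonzero_weight N (\<lambda>n. S n \<omega>) i" if "\<omega> \<in> space M" for \<omega>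
    using V_space[OF that] by (simp add: F_def V_def)
  have affine: "c (V \<omega>) * eps i \<omega> + R (V \<omega>) = nn_estimate N \<omega>" for \<omega>
    using \<open>i < N\<close>
    by (simp add: c_def R_def V_def nn_estimate_def sum.remove[of "{..<N}" i] algebra_simps)
  have "prob {\<omega>\<in>space M. V \<omega> \<in> F \<and> \<bar>c (V \<omega>) * W \<omega> (Inr i) + R (V \<omega>)\<bar> \<le> e}
      \<le> 2 * (1/2) * e * prob {\<omega>\<in>space M. V \<omega> \<in> F}"
    using \<open>0 \<le> e\<close> eps_distr[of i]
    by (intro prob_indep_affine_small_le[OF indep _ _ std_normal_density_le_half])
       (auto simp: W_eps F_def c_def R_def fmean_def abs_nn_weight first_nonzero_weight_def)
  moreover have "{\<omega>\<in>space M. V \<omega> \<in> F \<and> \<bar>c (V \<omega>) * W \<omega> (Inr i) + R (V \<omega>)\<bar> \<le> e}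
      = {\<omega>\<in>space M. first_nonzero_weight N (\<lambda>n. S n \<omega>) i \<and> \<bar>nn_estimate N \<omega>\<bar> \<le> e}"
    using F_iff affine by (auto simp: W_def)
  moreover have "{\<omega>\<in>space M. V \<omega> \<in> F} = {\<omega>\<in>space M. first_nonzero_weight N (\<lambda>n. S n \<omega>) i}"
    using F_iff by auto
  ultimately show ?thesis by simp
qed

lemma prob_nn_weights_zero:
  assumes "0 < N"
  shows "prob {\<omega>\<in>space M. \<forall>n<N. nn_weight N (\<lambda>n. S n \<omega>) n = 0} \<le> 2 * (5/7)^N"
proof -
  define miss where "miss I = {\<omega>\<in>space M. \<forall>n\<in>{..<N}. S n \<omega> \<notin> I}" for I :: "real set"
  have prob_miss: "prob (miss I) = (5/7)^N" if "I \<in> {{-1/2<..<0}, {0<..<1/2}}" for I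
  proof -
    have "I \<inter> loc_space = I" and "measure lborel I = 1/2"
      using that by (auto simp: loc_space_def)
    then show ?thesis
      using that \<open>0 < N\<close> unfolding miss_def by (subst prob_S_never_in) auto
  qed
  have "prob {\<omega>\<in>space M. \<forall>n<N. nn_weight N (\<lambda>n. S n \<omega>) n = 0}
      \<le> prob (miss {-1/2<..<0} \<union> miss {0<..<1/2})"
    using nn_weights_zero_imp_gap[OF \<open>0 < N\<close>]
    by (intro finite_measure_mono) (auto simp: miss_def)
  also have "\<dots> \<le> prob (miss {-1/2<..<0}) + prob (miss {0<..<1/2})"
    by (intro measure_Un_le) (simp_all add: miss_def)
  finally show ?thesis
    by (simp add: prob_miss)
qed

lemma prob_abs_nn_estimate_le:
  assumes "0 \<le> e"
  shows "prob {\<omega>\<in>space M. \<bar>nn_estimate N \<omega>\<bar> \<le> e}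
    \<le> prob {\<omega>\<in>space M. \<forall>n<N. nn_weight N (\<lambda>n. S n \<omega>) n = 0} + e"
proof -
  define first where "first i = {\<omega>\<in>space M. first_nonzero_weight N (\<lambda>n. S n \<omega>) i}" for i
  define zero where "zero = {\<omega>\<in>space M. \<forall>n<N. nn_weight N (\<lambda>n. S n \<omega>) n = 0}"
  define small where "small = {\<omega>\<in>space M. \<bar>nn_estimate N \<omega>\<bar> \<le> e}"
  have [measurable]: "first i \<in> events" "zero \<in> events" "small \<in> events" for i
    unfolding first_def zero_def small_def by measurable
  have "small \<subseteq> zero \<union> (\<Union>i<N. first i \<inter> small)"
  proof
    fix \<omega> assume "\<omega> \<in> small"
    show "\<omega> \<in> zero \<union> (\<Union>i<N. first i \<inter> small)"
    proof (cases "\<omega> \<in> zero")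
      case False
      with \<open>\<omega> \<in> small\<close> obtain n where "n < N" "nn_weight N (\<lambda>n. S n \<omega>) n \<noteq> 0"
        by (auto simp: zero_def small_def)
      then obtain i where "i < N" "first_nonzero_weight N (\<lambda>n. S n \<omega>) i"
        by (metis first_nonzero_weight_exists le_less_trans)
      with \<open>\<omega> \<in> small\<close> show ?thesis by (auto simp: first_def small_def)
    qed simp
  qed
  then have "prob small \<le> prob (zero \<union> (\<Union>i<N. first i \<inter> small))"
    by (intro finite_measure_mono) auto
  also have "\<dots> \<le> prob zero + prob (\<Union>i<N. first i \<inter> small)"
    by (intro measure_Un_le) auto
  also have "prob (\<Union>i<N. first i \<inter> small) \<le> (\<Sum>i<N. prob (first i \<inter> small))"
    by (intro finite_measure_subadditive_finite) auto
  also have "(\<Sum>i<N. prob (first i \<inter> small)) \<le> (\<Sum>i<N. e * prob (first i))"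
  proof (intro sum_mono)
    fix i assume "i \<in> {..<N}"
    have "first i \<inter> small
        = {\<omega>\<in>space M. first_nonzero_weight N (\<lambda>n. S n \<omega>) i \<and> \<bar>nn_estimate N \<omega>\<bar> \<le> e}"
      by (auto simp: first_def small_def)
    also have "prob \<dots> \<le> e * prob (first i)"
      unfolding first_def using \<open>i \<in> {..<N}\<close> \<open>0 \<le> e\<close> by (intro prob_first_nonzero_weight_small) auto
    finally show "prob (first i \<inter> small) \<le> e * prob (first i)" .
  qed
  also have "\<dots> = e * prob (\<Union>i<N. first i)"
    using first_nonzero_weight_unique
    by (subst finite_measure_finite_Union) (auto simp: disjoint_family_on_def first_def sum_distrib_left)
  also have "\<dots> \<le> e"
    using \<open>0 \<le> e\<close> by (simp add: mult_left_le)
  finally show ?thesis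
    by (simp add: zero_def small_def)
qed

lemma prob_nn_estimate_gt:
  assumes "0 < N"
  shows "3/4 - 2 * (5/7)^N \<le> prob {\<omega>\<in>space M. 1/4 < \<bar>nn_estimate N \<omega> - 0\<bar>}"
proof -
  have "{\<omega>\<in>space M. 1/4 < \<bar>nn_estimate N \<omega> - 0\<bar>} = space M - {\<omega>\<in>space M. \<bar>nn_estimate N \<omega>\<bar> \<le> 1/4}"
    by auto
  moreover have "prob {\<omega>\<in>space M. \<bar>nn_estimate N \<omega>\<bar> \<le> 1/4} \<le> 2 * (5/7)^N + 1/4"
    using prob_abs_nn_estimate_le[of "1/4" N] prob_nn_weights_zero[OF assms] by simp
  ultimately show ?thesis
    by (simp add: prob_compl)
qed

lemma not_conv_in_prob_tau:
  "\<not> conv_in_prob M (\<lambda>N \<omega>. tau (Psi1_apply N (\<lambda>n. S n \<omega>) (\<lambda>n. fmean (S n \<omega>) + eps n \<omega>))) 0"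
  unfolding tau_Psi1_apply nn_estimate_def[symmetric]
proof (rule not_conv_in_prob_of_lower_bound)
  show "(\<lambda>N. 3/4 - 2 * (5/7::real)^N) \<longlonglongrightarrow> 3/4"
    using tendsto_diff[OF tendsto_const tendsto_mult_right_zero[OF LIMSEQ_power_zero[of "5/7::real"]]]
    by simp
  show "\<forall>\<^sub>F N in sequentially. 3/4 - 2 * (5/7)^N \<le> prob {\<omega>\<in>space M. 1/4 < \<bar>nn_estimate N \<omega> - 0\<bar>}"
    using eventually_gt_at_top[of 0] by eventually_elim (rule prob_nn_estimate_gt)
qed simp_all

end

theorem mainTheorem4:
  fixes M :: "'a measure" and S eps :: "nat \<Rightarrow> 'a \<Rightarrow> real"
  assumes "prob_space M"
    and S_distr: "\<And>n. distributed M lborel (S n)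
                    (\<lambda>x. indicator loc_space x / measure lborel loc_space)"
    and eps_distr: "\<And>n. distributed M lborel (eps n) std_normal_density"
    and indep: "prob_space.indep_vars M (\<lambda>_. borel)
                  (\<lambda>i. case i of Inl n \<Rightarrow> S n | Inr n \<Rightarrow> eps n) UNIV"
  shows "(\<forall>s\<in>loc_space. var_fun s = 1) \<and> (\<forall>s\<in>loc_space. fourth_fun s = 3)
      \<and> strictly_concave_on UNIV target_obj
      \<and> (\<forall>b. target_obj b \<le> target_obj 0)
      \<and> (\<forall>b. (\<forall>b'. target_obj b' \<le> target_obj b) \<longrightarrow> b = 0)
      \<and> (AE \<omega> in M. infill (\<lambda>n. S n \<omega>) {Sstar 1, Sstar 2})
      \<and> \<not> conv_in_prob M (\<lambda>N \<omega>. ols N (\<lambda>n. S n \<omega>) (\<lambda>n. fmean (S n \<omega>) + eps n \<omega>)) 0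
      \<and> \<not> conv_in_prob M (\<lambda>N \<omega>. tau (Psi1_apply N (\<lambda>n. S n \<omega>)
                                   (\<lambda>n. fmean (S n \<omega>) + eps n \<omega>))) 0"
proof -
  interpret uniform_gaussian_design M S eps
    using assms by (intro uniform_gaussian_design.intro uniform_gaussian_design_axioms.intro)
  have "strictly_concave_on UNIV target_obj"
    unfolding target_obj_eq[abs_def] by (rule strictly_concave_on_neg_quadratic) simp
  moreover have "target_obj b \<le> target_obj 0" for b
    by (simp add: target_obj_eq)
  moreover have "b = 0" if "\<forall>b'. target_obj b' \<le> target_obj b" for b
    using that[rule_format, of 0] by (simp add: target_obj_eq)
  ultimately show ?thesis
    using var_fun_eq fourth_fun_eq infill_S not_conv_in_prob_ols not_conv_in_prob_tau by blast
qed

end
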